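(* Consider the VP forward SDE $\mathrm{d}\boldsymbol{x}_t=-\tfrac12\beta(t)\boldsymbol{x}_t\,\mathrm{d}t+\sqrt{\beta(t)}\,\mathrm{d}\boldsymbol{w}_t$ with $0\le\beta(t)\le\beta_{\max}<\infty$, $\alpha(t)=\exp(-\int_0^t\beta(s)\,\mathrm{d}s)$, started from a clean random variable $\boldsymbol{x}_0$ supported on a compact set $\mathcal{X}$ with $\sup_{\boldsymbol{x}\in\mathcal{X}}\|\boldsymbol{x}\|_2\le B_x$; let $p_t$ denote the law of $\boldsymbol{x}_t$. Suppose the score network satisfies $\mathbb{E}_{\boldsymbol{x}\sim p_t}\big[\|\nabla_{\boldsymbol{x}}\log p_t(\boldsymbol{x})-\boldsymbol{s}_{\boldsymbol{\theta}}(\boldsymbol{x},t)\|_2^2\big]\le\epsilon_s(t)^2$ for all $t$. Let $\hat{\boldsymbol{x}}_{0|t}=\frac{1}{\sqrt{\alpha(t)}}\big(\boldsymbol{x}_t+(1-\alpha(t))\boldsymbol{s}_{\boldsymbol{\theta}}(\boldsymbol{x}_t,t)\big)$. Then for every $t\in[0,T]$, $$\mathbb{E}\|\hat{\boldsymbol{x}}_{0|t}\|^2\le K(t)<\infty,\qquad K(t)=\Big(B_x+\frac{1-\alpha(t)}{\sqrt{\alpha(t)}}\epsilon_s(t)\Big)^2,$$ where the expectation is over $\boldsymbol{x}_t\sim p_t$. *)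

theory Defs
  imports "HOL-Probability.Probability"
begin

definition vp_alpha :: "(real \<Rightarrow> real) \<Rightarrow> real \<Rightarrow> real" where
  "vp_alpha \<beta> t = exp (- integral {0..t} \<beta>)"

definition std_gauss :: "'a::euclidean_space measure" where
  "std_gauss = density lborel
     (\<lambda>z. ennreal ((2 * pi) powr (- real DIM('a) / 2) * exp (- (norm z)\<^sup>2 / 2)))"

text \<open>Law p_t of x_t for the VP SDE dx = -1/2 beta x dt + sqrt beta dw started from x_0 ~ mu0:
  x_t has the same law as sqrt(alpha t) x_0 + sqrt(1 - alpha t) z, with z ~ N(0,I) independent of x_0.\<close>
definition vp_law :: "'a::euclidean_space measure \<Rightarrow> (real \<Rightarrow> real) \<Rightarrow> real \<Rightarrow> 'a measure" where
  "vp_law \<mu>0 \<beta> t = distr (\<mu>0 \<Otimes>\<^sub>M std_gauss) borel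
     (\<lambda>(y, z). sqrt (vp_alpha \<beta> t) *\<^sub>R y + sqrt (1 - vp_alpha \<beta> t) *\<^sub>R z)"

text \<open>The (smooth) Lebesgue density of p_t when alpha t < 1 (Gaussian convolution of mu0).\<close>
definition vp_density :: "'a::euclidean_space measure \<Rightarrow> (real \<Rightarrow> real) \<Rightarrow> real \<Rightarrow> 'a \<Rightarrow> real" where
  "vp_density \<mu>0 \<beta> t x = (\<integral> y. (2 * pi * (1 - vp_alpha \<beta> t)) powr (- real DIM('a) / 2)
       * exp (- (norm (x - sqrt (vp_alpha \<beta> t) *\<^sub>R y))\<^sup>2 / (2 * (1 - vp_alpha \<beta> t))) \<partial>\<mu>0)"

definition grad :: "('a::euclidean_space \<Rightarrow> real) \<Rightarrow> 'a \<Rightarrow> 'a" where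
  "grad f x = (SOME g. (f has_derivative (\<lambda>h. g \<bullet> h)) (at x))"

definition vp_score :: "'a::euclidean_space measure \<Rightarrow> (real \<Rightarrow> real) \<Rightarrow> real \<Rightarrow> 'a \<Rightarrow> 'a" where
  "vp_score \<mu>0 \<beta> t x = grad (\<lambda>y. ln (vp_density \<mu>0 \<beta> t y)) x"

definition tweedie_est :: "('a::euclidean_space \<Rightarrow> real \<Rightarrow> 'a) \<Rightarrow> (real \<Rightarrow> real) \<Rightarrow> real \<Rightarrow> 'a \<Rightarrow> 'a" where
  "tweedie_est s \<beta> t x = (1 / sqrt (vp_alpha \<beta> t)) *\<^sub>R (x + (1 - vp_alpha \<beta> t) *\<^sub>R s x t)"

end

theory Submission
  imports Defs
begin

(* Write x_t = sqrt alpha x_0 + sqrt (1 - alpha) z. For alpha < 1 the law p_t is a Gaussian mixture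
   over the law of x_0, and differentiating under the integral sign gives Tweedie's formula
   x + (1 - alpha) grad log p_t x = sqrt alpha E[x_0 | x_t = x], where the posterior mean has norm at
   most B_x. Hence hat x_{0|t} = E[x_0 | x_t] + c (s_theta - grad log p_t) with c = (1 - alpha) / sqrt alpha,
   so |hat x_{0|t}| <= B_x + c F pointwise, F being the score error, and E (B_x + c F)^2 <= (B_x + c eps)^2
   because E F <= sqrt (E F^2) <= eps. For alpha = 1 there is no noise and hat x_{0|t} = x_t = x_0. *)

lemma has_derivative_at_of_quadratic_remainder:
  fixes f :: "'a::real_normed_vector \<Rightarrow> 'b::real_normed_vector"
  assumes "bounded_linear D" and "\<And>h. norm (f (x + h) - f x - D h) \<le> K * (norm h)\<^sup>2"
  shows "(f has_derivative D) (at x)"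
  unfolding has_derivative_at
proof
  show "bounded_linear D" by fact
  have bound: "norm (norm (f (x + h) - f x - D h) / norm h) \<le> \<bar>K\<bar> * norm h" for h
  proof (cases "h = 0")
    case False
    have "K * (norm h)\<^sup>2 \<le> \<bar>K\<bar> * (norm h)\<^sup>2"
      by (intro mult_right_mono) auto
    with assms(2)[of h] have "norm (f (x + h) - f x - D h) \<le> \<bar>K\<bar> * (norm h)\<^sup>2"
      by linarith
    with False show ?thesis
      by (simp add: divide_le_eq power2_eq_square mult.assoc)
  qed simp
  have "((\<lambda>h. \<bar>K\<bar> * norm h) \<longlongrightarrow> 0) (at 0)"
    by (intro tendsto_mult_right_zero tendsto_norm_zero tendsto_ident_at)
  then show "((\<lambda>h. norm (f (x + h) - f x - D h) / norm h) \<longlongrightarrow> 0) (at 0)"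
    by (rule Lim_null_comparison[OF always_eventually[OF allI[OF bound]]])
qed

lemma grad_eqI:
  fixes f :: "'a::euclidean_space \<Rightarrow> real"
  assumes "(f has_derivative (\<lambda>h. g \<bullet> h)) (at x)"
  shows "grad f x = g"
proof -
  have "(f has_derivative (\<lambda>h. grad f x \<bullet> h)) (at x)"
    unfolding grad_def using assms by (rule someI)
  then have "(\<lambda>h. grad f x \<bullet> h) = (\<lambda>h. g \<bullet> h)"
    using assms by (rule has_derivative_unique)
  then show ?thesis
    by (metis vector_eq_rdot)
qed

lemma gaussian_second_derivative_le:
  fixes w h :: "'a::real_inner" and v :: real
  assumes "0 < v"
  shows "\<bar>exp (- (norm w)\<^sup>2 / (2 * v)) * ((w \<bullet> h)\<^sup>2 / v\<^sup>2 - (norm h)\<^sup>2 / v)\<bar>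
           \<le> 3 / v * (norm h)\<^sup>2"
proof -
  define r where "r = (norm w)\<^sup>2 / (2 * v)"
  have r: "0 \<le> r" using assms by (simp add: r_def)
  have "r \<le> exp r"
    using exp_ge_add_one_self[of r] by linarith
  then have exp_r: "exp (- r) * r \<le> 1"
    by (simp add: exp_minus field_simps)
  have "(w \<bullet> h)\<^sup>2 \<le> (norm w)\<^sup>2 * (norm h)\<^sup>2"
    by (metis Cauchy_Schwarz_ineq2 abs_ge_zero power2_abs power_mono power_mult_distrib)
  then have "exp (- r) * ((w \<bullet> h)\<^sup>2 / v\<^sup>2) \<le> exp (- r) * r * (2 / v * (norm h)\<^sup>2)"
    using assms by (simp add: r_def divide_right_mono power2_eq_square field_simps)
  also have "\<dots> \<le> 2 / v * (norm h)\<^sup>2"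
    using exp_r r assms by (intro mult_left_le_one_le) auto
  finally have mixed: "exp (- r) * ((w \<bullet> h)\<^sup>2 / v\<^sup>2) \<le> 2 / v * (norm h)\<^sup>2" .
  have diagonal: "exp (- r) * ((norm h)\<^sup>2 / v) \<le> (norm h)\<^sup>2 / v"
    using r assms by (intro mult_left_le_one_le) auto
  have "0 \<le> exp (- r) * ((w \<bullet> h)\<^sup>2 / v\<^sup>2)" "0 \<le> exp (- r) * ((norm h)\<^sup>2 / v)"
    using assms by simp_all
  then have "\<bar>exp (- r) * ((w \<bullet> h)\<^sup>2 / v\<^sup>2 - (norm h)\<^sup>2 / v)\<bar>
      \<le> exp (- r) * ((w \<bullet> h)\<^sup>2 / v\<^sup>2) + exp (- r) * ((norm h)\<^sup>2 / v)"
    by (auto simp: abs_le_iff right_diff_distrib)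
  also have "\<dots> \<le> 3 / v * (norm h)\<^sup>2"
    using mixed diagonal by (simp add: field_simps)
  finally show ?thesis
    by (simp add: r_def)
qed

lemma gaussian_taylor_remainder_le:
  fixes u h :: "'a::real_inner" and v :: real
  assumes v: "0 < v"
  shows "\<bar>exp (- (norm (u + h))\<^sup>2 / (2 * v)) - exp (- (norm u)\<^sup>2 / (2 * v))
           + exp (- (norm u)\<^sup>2 / (2 * v)) * (u \<bullet> h) / v\<bar> \<le> 3 / (2 * v) * (norm h)\<^sup>2"
proof -
  define A B Q where "A = u \<bullet> u" and "B = u \<bullet> h" and "Q = h \<bullet> h"
  define g where "g t = exp (- (A + 2 * t * B + t\<^sup>2 * Q) / (2 * v))" for t
  \<comment> \<open>d n is the n-th derivative of t \<mapsto> exp (- norm (u + t h) ^ 2 / (2 v))\<close>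
  define d :: "nat \<Rightarrow> real \<Rightarrow> real" where
    "d n t = (if n = 0 then g t else if n = 1 then - g t * (B + t * Q) / v
              else g t * ((B + t * Q)\<^sup>2 / v\<^sup>2 - Q / v))" for n t
  have line: "(norm (u + t *\<^sub>R h))\<^sup>2 = A + 2 * t * B + t\<^sup>2 * Q" "(u + t *\<^sub>R h) \<bullet> h = B + t * Q" for t
    unfolding A_def B_def Q_def power2_norm_eq_inner
    by (simp_all add: inner_add_left inner_add_right inner_commute[of h u] power2_eq_square
        algebra_simps)
  have Q_norm: "Q = (norm h)\<^sup>2"
    by (simp add: Q_def power2_norm_eq_inner)
  have "DERIV (d 0) t :> d 1 t" "DERIV (d 1) t :> d 2 t" for t
    unfolding d_def g_def using v
    by (auto intro!: derivative_eq_intros simp: power2_eq_square field_simps)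
  then obtain t where "d 0 1 = (\<Sum>m<2. d m 0 / fact m * 1 ^ m) + d 2 t / fact 2 * 1 ^ 2"
    using Maclaurin[of 1 2 d "d 0"] by (force simp: less_Suc_eq numeral_2_eq_2)
  then have taylor: "d 0 1 - d 0 0 - d 1 0 = d 2 t / 2"
    by (simp add: numeral_2_eq_2)
  have lhs: "d 0 1 - d 0 0 - d 1 0 = exp (- (norm (u + h))\<^sup>2 / (2 * v)) - exp (- (norm u)\<^sup>2 / (2 * v))
           + exp (- (norm u)\<^sup>2 / (2 * v)) * (u \<bullet> h) / v"
    using line[of 0] line[of 1] by (simp add: d_def g_def B_def)
  have "d 2 t = exp (- (norm (u + t *\<^sub>R h))\<^sup>2 / (2 * v))
      * (((u + t *\<^sub>R h) \<bullet> h)\<^sup>2 / v\<^sup>2 - (norm h)\<^sup>2 / v)"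
    unfolding d_def g_def line Q_norm by simp
  then have "\<bar>d 2 t\<bar> \<le> 3 / v * (norm h)\<^sup>2"
    using gaussian_second_derivative_le[OF v] by simp
  then have "\<bar>d 2 t / 2\<bar> \<le> 3 / (2 * v) * (norm h)\<^sup>2"
    by (simp add: abs_divide)
  then show ?thesis
    unfolding lhs[symmetric] taylor .
qed

lemma (in prob_space) nn_integral_affine_square_le:
  fixes f :: "'a \<Rightarrow> real"
  assumes f: "f \<in> borel_measurable M"
    and moment: "(\<integral>\<^sup>+ x. ennreal ((f x)\<^sup>2) \<partial>M) \<le> ennreal (e\<^sup>2)"
    and "0 \<le> e" "0 \<le> A" "0 \<le> c"
  shows "(\<integral>\<^sup>+ x. ennreal ((A + c * f x)\<^sup>2) \<partial>M) \<le> ennreal ((A + c * e)\<^sup>2)"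
proof -
  have sq_int: "integrable M (\<lambda>x. (f x)\<^sup>2)"
    using f moment by (intro integrableI_bounded) (auto simp: top.not_eq_extremum le_less_trans)
  have f_int: "integrable M f"
    by (rule square_integrable_imp_integrable[OF f sq_int])
  have "ennreal (expectation (\<lambda>x. (f x)\<^sup>2)) \<le> ennreal (e\<^sup>2)"
    using moment by (simp add: nn_integral_eq_integral[OF sq_int, symmetric])
  then have second: "expectation (\<lambda>x. (f x)\<^sup>2) \<le> e\<^sup>2"
    using \<open>0 \<le> e\<close> by (simp add: ennreal_le_iff)
  then have "(expectation f)\<^sup>2 \<le> e\<^sup>2"
    using variance_positive[of f] variance_eq[OF f_int sq_int] by linarith
  then have first: "expectation f \<le> e"
    using \<open>0 \<le> e\<close> by (simp add: power2_le_iff_abs_le)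
  have "expectation (\<lambda>x. (A + c * f x)\<^sup>2)
      = A\<^sup>2 + 2 * A * c * expectation f + c\<^sup>2 * expectation (\<lambda>x. (f x)\<^sup>2)"
    using f_int sq_int by (simp add: power2_sum power_mult_distrib prob_space algebra_simps)
  also have "\<dots> \<le> A\<^sup>2 + 2 * A * c * e + c\<^sup>2 * e\<^sup>2"
    using first second assms(3-5) by (intro add_mono mult_left_mono) auto
  also have "\<dots> = (A + c * e)\<^sup>2"
    by (simp add: power2_sum power_mult_distrib)
  finally have "expectation (\<lambda>x. (A + c * f x)\<^sup>2) \<le> (A + c * e)\<^sup>2" .
  moreover have "integrable M (\<lambda>x. (A + c * f x)\<^sup>2)"
    using f_int sq_int by (simp add: power2_sum power_mult_distrib)
  ultimately show ?thesis
    by (simp add: nn_integral_eq_integral ennreal_leI)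
qed

(* For C = (2 pi v) powr (- DIM('a) / 2), mixture_density is the density of a Y + sqrt v Z with Y ~ M
   and Z standard Gaussian, and posterior_mean x = E[Y | a Y + sqrt v Z = x]. The score does not
   depend on C. *)
locale gaussian_mixture = prob_space M for M :: "'a::euclidean_space measure" +
  fixes a v C B :: real
  assumes sets_M [measurable_cong]: "sets M = sets borel"
    and norm_le_AE: "AE y in M. norm y \<le> B"
    and v_pos: "0 < v" and C_pos: "0 < C"
begin

definition kernel :: "'a \<Rightarrow> 'a \<Rightarrow> real" where
  "kernel x y = C * exp (- (norm (x - a *\<^sub>R y))\<^sup>2 / (2 * v))"

definition mixture_density :: "'a \<Rightarrow> real" where
  "mixture_density x = (\<integral>y. kernel x y \<partial>M)"

definition posterior_mean :: "'a \<Rightarrow> 'a" where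
  "posterior_mean x = (1 / mixture_density x) *\<^sub>R (\<integral>y. kernel x y *\<^sub>R y \<partial>M)"

lemma B_nonneg: "0 \<le> B"
proof -
  have "AE y in M. 0 \<le> B"
    using norm_le_AE by eventually_elim (rule order_trans[OF norm_ge_zero])
  then show ?thesis by simp
qed

lemma kernel_pos: "0 < kernel x y"
  using C_pos by (simp add: kernel_def)

lemma kernel_le: "kernel x y \<le> C"
  using C_pos v_pos by (simp add: kernel_def)

lemma borel_measurable_kernel [measurable]:
  "(\<lambda>(x, y). kernel x y) \<in> borel_measurable (borel \<Otimes>\<^sub>M M)"
  "kernel x \<in> borel_measurable M"
  unfolding kernel_def by measurable

lemma integrable_kernel: "integrable M (kernel x)"
  using kernel_pos kernel_le by (intro integrable_const_bound[where B=C]) (auto simp: less_imp_le)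

lemma integrable_kernel_scaleR: "integrable M (\<lambda>y. kernel x y *\<^sub>R y)"
proof (rule integrable_const_bound[where B="C * B"])
  show "AE y in M. norm (kernel x y *\<^sub>R y) \<le> C * B"
    using norm_le_AE
    by eventually_elim (use kernel_pos kernel_le C_pos in \<open>auto simp: less_imp_le intro!: mult_mono\<close>)
qed measurable

lemma mixture_density_pos: "0 < mixture_density x"
  using integral_less_AE_space[of "\<lambda>_. 0" "kernel x"] kernel_pos integrable_kernel
  by (simp add: mixture_density_def emeasure_space_1)

lemma kernel_taylor_remainder_le:
  "\<bar>kernel (x + h) y - kernel x y - kernel x y / v * ((a *\<^sub>R y - x) \<bullet> h)\<bar>
     \<le> 3 * C / (2 * v) * (norm h)\<^sup>2"
proof -
  define u where "u = x - a *\<^sub>R y"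
  have "kernel (x + h) y - kernel x y - kernel x y / v * ((a *\<^sub>R y - x) \<bullet> h)
      = C * (exp (- (norm (u + h))\<^sup>2 / (2 * v)) - exp (- (norm u)\<^sup>2 / (2 * v))
             + exp (- (norm u)\<^sup>2 / (2 * v)) * (u \<bullet> h) / v)"
    using v_pos by (simp add: kernel_def u_def inner_diff_left field_simps)
  also have "\<bar>\<dots>\<bar> \<le> C * (3 / (2 * v) * (norm h)\<^sup>2)"
    unfolding abs_mult using C_pos v_pos
    by (intro mult_mono gaussian_taylor_remainder_le) auto
  finally show ?thesis by simp
qed

lemma kernel_gradient_eq:
  "kernel x y / v * ((a *\<^sub>R y - x) \<bullet> h) = a / v * ((kernel x y *\<^sub>R y) \<bullet> h) - (x \<bullet> h) / v * kernel x y"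
  by (simp add: inner_diff_left algebra_simps)

lemma integrable_kernel_gradient: "integrable M (\<lambda>y. kernel x y / v * ((a *\<^sub>R y - x) \<bullet> h))"
  unfolding kernel_gradient_eq
  by (intro Bochner_Integration.integrable_diff integrable_mult_right integrable_inner_left
      integrable_kernel_scaleR integrable_kernel)

lemma integral_kernel_gradient:
  "(\<integral>y. kernel x y / v * ((a *\<^sub>R y - x) \<bullet> h) \<partial>M)
     = ((mixture_density x / v) *\<^sub>R (a *\<^sub>R posterior_mean x - x)) \<bullet> h"
proof -
  have "(\<integral>y. kernel x y / v * ((a *\<^sub>R y - x) \<bullet> h) \<partial>M)
      = a / v * ((\<integral>y. kernel x y *\<^sub>R y \<partial>M) \<bullet> h) - (x \<bullet> h) / v * mixture_density x"
    unfolding kernel_gradient_eq mixture_density_def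
    using integrable_kernel_scaleR[of x] integrable_kernel[of x]
    by (simp only: Bochner_Integration.integral_diff integrable_mult_right integrable_inner_left
        integral_mult_right_zero integral_inner_left)
  then show ?thesis
    using mixture_density_pos[of x]
    by (simp add: posterior_mean_def inner_diff_left algebra_simps)
qed

lemma has_derivative_mixture_density:
  "(mixture_density has_derivative
     (\<lambda>h. ((mixture_density x / v) *\<^sub>R (a *\<^sub>R posterior_mean x - x)) \<bullet> h)) (at x)"
proof (rule has_derivative_at_of_quadratic_remainder[where K="3 * C / (2 * v)"])
  fix h :: 'a
  let ?r = "\<lambda>y. kernel (x + h) y - kernel x y - kernel x y / v * ((a *\<^sub>R y - x) \<bullet> h)"
  have "(\<integral>y. ?r y \<partial>M) = mixture_density (x + h) - mixture_density x
        - (\<integral>y. kernel x y / v * ((a *\<^sub>R y - x) \<bullet> h) \<partial>M)"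
    unfolding mixture_density_def
    by (simp only: Bochner_Integration.integral_diff Bochner_Integration.integrable_diff
        integrable_kernel integrable_kernel_gradient)
  then have remainder: "mixture_density (x + h) - mixture_density x
        - ((mixture_density x / v) *\<^sub>R (a *\<^sub>R posterior_mean x - x)) \<bullet> h = (\<integral>y. ?r y \<partial>M)"
    unfolding integral_kernel_gradient[symmetric] by (rule sym)
  have "norm (\<integral>y. ?r y \<partial>M) \<le> (\<integral>y. norm (?r y) \<partial>M)"
    by (rule integral_norm_bound)
  also have "\<dots> \<le> (\<integral>y. 3 * C / (2 * v) * (norm h)\<^sup>2 \<partial>M)"
    using kernel_taylor_remainder_le
    by (intro integral_mono integrable_norm Bochner_Integration.integrable_diff integrable_kernel
        integrable_kernel_gradient) auto
  finally show "norm (mixture_density (x + h) - mixture_density x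
        - ((mixture_density x / v) *\<^sub>R (a *\<^sub>R posterior_mean x - x)) \<bullet> h)
      \<le> 3 * C / (2 * v) * (norm h)\<^sup>2"
    unfolding remainder by (simp add: prob_space)
qed (rule bounded_linear_inner_right)

lemma grad_ln_mixture_density:
  "grad (\<lambda>x. ln (mixture_density x)) x = (1 / v) *\<^sub>R (a *\<^sub>R posterior_mean x - x)"
proof (rule grad_eqI, rule has_derivative_eq_rhs)
  show "((\<lambda>x. ln (mixture_density x)) has_derivative (\<lambda>h.
      ((mixture_density x / v) *\<^sub>R (a *\<^sub>R posterior_mean x - x)) \<bullet> h * inverse (mixture_density x))) (at x)"
    by (rule DERIV_compose_FDERIV[OF DERIV_ln[OF mixture_density_pos] has_derivative_mixture_density])
  have "mixture_density x \<noteq> 0"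
    using mixture_density_pos[of x] by simp
  then show "(\<lambda>h. ((mixture_density x / v) *\<^sub>R (a *\<^sub>R posterior_mean x - x)) \<bullet> h * inverse (mixture_density x))
      = (\<lambda>h. ((1 / v) *\<^sub>R (a *\<^sub>R posterior_mean x - x)) \<bullet> h)"
    by (intro ext, simp only: inner_scaleR_left) (simp add: field_simps)
qed

lemma tweedie_formula: "x + v *\<^sub>R grad (\<lambda>x. ln (mixture_density x)) x = a *\<^sub>R posterior_mean x"
  using v_pos by (simp add: grad_ln_mixture_density)

lemma norm_posterior_mean_le: "norm (posterior_mean x) \<le> B"
proof -
  have "norm (\<integral>y. kernel x y *\<^sub>R y \<partial>M) \<le> (\<integral>y. norm (kernel x y *\<^sub>R y) \<partial>M)"
    by (rule integral_norm_bound)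
  also have "\<dots> \<le> (\<integral>y. B * kernel x y \<partial>M)"
  proof (rule integral_mono_AE)
    show "integrable M (\<lambda>y. norm (kernel x y *\<^sub>R y))"
      by (rule integrable_norm[OF integrable_kernel_scaleR])
    show "integrable M (\<lambda>y. B * kernel x y)"
      by (simp add: integrable_kernel)
    show "AE y in M. norm (kernel x y *\<^sub>R y) \<le> B * kernel x y"
      using norm_le_AE
      by eventually_elim (use kernel_pos[of x] in \<open>simp add: abs_of_pos mult.commute mult_left_mono less_imp_le\<close>)
  qed
  finally show ?thesis
    using mixture_density_pos[of x]
    by (simp add: posterior_mean_def mixture_density_def divide_le_eq mult.commute)
qed

lemma borel_measurable_posterior_mean [measurable]: "posterior_mean \<in> borel_measurable borel"
proof -
  have "(\<lambda>(x, y). kernel x y *\<^sub>R y) \<in> borel_measurable (borel \<Otimes>\<^sub>M M)"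
    by measurable
  then have "(\<lambda>x. \<integral>y. kernel x y *\<^sub>R y \<partial>M) \<in> borel_measurable borel"
    by (rule borel_measurable_lebesgue_integral)
  moreover have "mixture_density \<in> borel_measurable borel"
    unfolding mixture_density_def
    by (rule borel_measurable_lebesgue_integral) measurable
  ultimately show ?thesis
    unfolding posterior_mean_def by measurable
qed

lemma borel_measurable_score: "(\<lambda>x. grad (\<lambda>x. ln (mixture_density x)) x) \<in> borel_measurable borel"
  unfolding grad_ln_mixture_density by measurable

end

lemma std_gauss_density_eq_prod:
  fixes z :: "'a::euclidean_space"
  shows "(2 * pi) powr (- real DIM('a) / 2) * exp (- (norm z)\<^sup>2 / 2)
        = (\<Prod>b\<in>Basis. std_normal_density (z \<bullet> b))"
proof -
  have "(norm z)\<^sup>2 = (\<Sum>b\<in>Basis. (z \<bullet> b)\<^sup>2)"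
    unfolding power2_norm_eq_inner by (subst euclidean_inner) (simp add: power2_eq_square)
  then have "exp (- (norm z)\<^sup>2 / 2) = (\<Prod>b\<in>Basis. exp (- (z \<bullet> b)\<^sup>2 / 2))"
    by (simp add: exp_sum[symmetric] sum_negf sum_divide_distrib)
  moreover have "(2 * pi) powr (- real DIM('a) / 2) = (\<Prod>b\<in>(Basis :: 'a set). 1 / sqrt (2 * pi))"
  proof -
    have "1 / sqrt (2 * pi) = (2 * pi) powr (- (1 / 2))"
      by (simp add: powr_minus_divide powr_half_sqrt)
    then have "(1 / sqrt (2 * pi)) ^ DIM('a) = (2 * pi) powr (- (1 / 2) * real DIM('a))"
      by (simp add: powr_realpow[symmetric] powr_powr)
    then show ?thesis
      by simp
  qed
  ultimately have "(2 * pi) powr (- real DIM('a) / 2) * exp (- (norm z)\<^sup>2 / 2)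
      = (\<Prod>b\<in>(Basis :: 'a set). 1 / sqrt (2 * pi)) * (\<Prod>b\<in>Basis. exp (- (z \<bullet> b)\<^sup>2 / 2))"
    by (simp only:)
  also have "\<dots> = (\<Prod>b\<in>Basis. std_normal_density (z \<bullet> b))"
    unfolding prod.distrib[symmetric] std_normal_density_def ..
  finally show ?thesis .
qed

lemma prob_space_std_gauss: "prob_space (std_gauss :: 'a::euclidean_space measure)"
proof
  have "emeasure (std_gauss :: 'a measure) (space std_gauss)
      = (\<integral>\<^sup>+ z. ennreal ((2 * pi) powr (- real DIM('a) / 2) * exp (- (norm z)\<^sup>2 / 2)) \<partial>(lborel :: 'a measure))"
    unfolding std_gauss_def by (simp add: emeasure_density)
  also have "\<dots> = (\<integral>\<^sup>+ z. (\<Prod>b\<in>Basis. ennreal (std_normal_density (z \<bullet> b))) \<partial>(lborel :: 'a measure))"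
    by (intro nn_integral_cong, subst std_gauss_density_eq_prod)
       (simp add: prod_ennreal normal_density_nonneg)
  also have "\<dots> = (\<Prod>b\<in>(Basis :: 'a set). \<integral>\<^sup>+ x. ennreal (std_normal_density x) \<partial>lborel)"
    by (rule nn_integral_lborel_prod) auto
  also have "\<dots> = 1"
    by (simp add: nn_integral_eq_integral normal_density_nonneg)
  finally show "emeasure (std_gauss :: 'a measure) (space std_gauss) = 1" .
qed

lemma vp_alpha_le_one:
  assumes "\<And>s. 0 \<le> \<beta> s"
  shows "vp_alpha \<beta> t \<le> 1"
proof -
  have "0 \<le> integral {0..t} \<beta>"
    using assms by (cases "\<beta> integrable_on {0..t}") (auto intro: integral_nonneg simp: not_integrable_integral)
  then show ?thesis
    by (simp add: vp_alpha_def)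
qed

lemma sets_vp_law: "sets (vp_law \<mu>0 \<beta> t) = sets borel"
  by (simp add: vp_law_def)

lemma prob_space_vp_law:
  fixes \<mu>0 :: "'a::euclidean_space measure"
  assumes "prob_space \<mu>0" and "sets \<mu>0 = sets borel"
  shows "prob_space (vp_law \<mu>0 \<beta> t)"
proof -
  interpret pair_prob_space \<mu>0 "std_gauss :: 'a measure"
    using assms(1) prob_space_std_gauss
    by (auto simp: pair_prob_space_def pair_sigma_finite_def intro: prob_space_imp_sigma_finite)
  have sets_eq: "sets (\<mu>0 \<Otimes>\<^sub>M (std_gauss :: 'a measure)) = sets (borel \<Otimes>\<^sub>M (borel :: 'a measure))"
    using assms(2) by (intro sets_pair_measure_cong) (simp_all add: std_gauss_def)
  have "(\<lambda>(y, z). sqrt (vp_alpha \<beta> t) *\<^sub>R y + sqrt (1 - vp_alpha \<beta> t) *\<^sub>R z)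
      \<in> borel_measurable (borel \<Otimes>\<^sub>M (borel :: 'a measure))"
    by measurable
  then have "(\<lambda>(y, z). sqrt (vp_alpha \<beta> t) *\<^sub>R y + sqrt (1 - vp_alpha \<beta> t) *\<^sub>R z)
      \<in> borel_measurable (\<mu>0 \<Otimes>\<^sub>M std_gauss)"
    unfolding measurable_cong_sets[OF sets_eq refl] .
  then show ?thesis
    unfolding vp_law_def by (rule prob_space_distr)
qed

lemma vp_law_noiseless:
  fixes \<mu>0 :: "'a::euclidean_space measure"
  assumes "prob_space \<mu>0" and "sets \<mu>0 = sets borel" and "vp_alpha \<beta> t = 1"
  shows "vp_law \<mu>0 \<beta> t = \<mu>0"
proof -
  have "vp_law \<mu>0 \<beta> t = distr (\<mu>0 \<Otimes>\<^sub>M (std_gauss :: 'a measure)) \<mu>0 fst"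
    unfolding vp_law_def assms(3) by (rule Measure_Space.distr_cong) (auto simp: assms(2))
  also have "\<dots> = \<mu>0"
    by (rule prob_space.distr_pair_fst[OF prob_space_std_gauss])
  finally show ?thesis .
qed

lemma tweedie_est_second_moment_le:
  fixes \<mu>0 :: "'a::euclidean_space measure" and s :: "'a \<Rightarrow> real \<Rightarrow> 'a"
  assumes \<mu>0: "prob_space \<mu>0" "sets \<mu>0 = sets borel" and bounded: "AE y in \<mu>0. norm y \<le> B"
    and noisy: "vp_alpha \<beta> t < 1"
    and s_measurable [measurable]: "(\<lambda>x. s x t) \<in> borel_measurable borel"
    and "0 \<le> e"
    and score_error: "(\<integral>\<^sup>+ x. ennreal ((norm (vp_score \<mu>0 \<beta> t x - s x t))\<^sup>2) \<partial>vp_law \<mu>0 \<beta> t)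
        \<le> ennreal (e\<^sup>2)"
  shows "(\<integral>\<^sup>+ x. ennreal ((norm (tweedie_est s \<beta> t x))\<^sup>2) \<partial>vp_law \<mu>0 \<beta> t)
           \<le> ennreal ((B + (1 - vp_alpha \<beta> t) / sqrt (vp_alpha \<beta> t) * e)\<^sup>2)"
proof -
  define \<alpha> where "\<alpha> = vp_alpha \<beta> t"
  define c where "c = (1 - \<alpha>) / sqrt \<alpha>"
  have \<alpha>: "0 < \<alpha>" "\<alpha> < 1"
    using noisy by (simp_all add: \<alpha>_def vp_alpha_def)
  then have "0 \<le> c"
    by (simp add: c_def)
  interpret gaussian_mixture \<mu>0 "sqrt \<alpha>" "1 - \<alpha>" "(2 * pi * (1 - \<alpha>)) powr (- real DIM('a) / 2)" B
    using \<mu>0 bounded \<alpha> by (simp add: gaussian_mixture_def gaussian_mixture_axioms_def)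
  have "vp_density \<mu>0 \<beta> t = mixture_density"
    by (rule ext) (simp only: vp_density_def mixture_density_def kernel_def \<alpha>_def[symmetric])
  then have score_eq: "vp_score \<mu>0 \<beta> t x = grad (\<lambda>x. ln (mixture_density x)) x" for x
    by (simp only: vp_score_def)
  then have score: "x + (1 - \<alpha>) *\<^sub>R vp_score \<mu>0 \<beta> t x = sqrt \<alpha> *\<^sub>R posterior_mean x" for x
    by (simp only: tweedie_formula)
  have "x + (1 - \<alpha>) *\<^sub>R s x t = sqrt \<alpha> *\<^sub>R posterior_mean x + (1 - \<alpha>) *\<^sub>R (s x t - vp_score \<mu>0 \<beta> t x)" for x
    unfolding score[symmetric] by (simp add: algebra_simps)
  then have tweedie: "tweedie_est s \<beta> t x = posterior_mean x + c *\<^sub>R (s x t - vp_score \<mu>0 \<beta> t x)" for x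
    using \<alpha> by (simp add: tweedie_est_def c_def \<alpha>_def[symmetric] scaleR_add_right)
  have pointwise: "norm (tweedie_est s \<beta> t x) \<le> B + c * norm (vp_score \<mu>0 \<beta> t x - s x t)" for x
  proof -
    have "norm (tweedie_est s \<beta> t x) \<le> norm (posterior_mean x) + norm (c *\<^sub>R (s x t - vp_score \<mu>0 \<beta> t x))"
      unfolding tweedie by (rule norm_triangle_ineq)
    then show ?thesis
      using norm_posterior_mean_le[of x] \<open>0 \<le> c\<close> by (simp add: norm_minus_commute)
  qed
  have measurable: "(\<lambda>x. norm (vp_score \<mu>0 \<beta> t x - s x t)) \<in> borel_measurable (vp_law \<mu>0 \<beta> t)"
    unfolding score_eq measurable_cong_sets[OF sets_vp_law refl] using borel_measurable_score
    by measurable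
  have "(\<integral>\<^sup>+ x. ennreal ((norm (tweedie_est s \<beta> t x))\<^sup>2) \<partial>vp_law \<mu>0 \<beta> t)
      \<le> (\<integral>\<^sup>+ x. ennreal ((B + c * norm (vp_score \<mu>0 \<beta> t x - s x t))\<^sup>2) \<partial>vp_law \<mu>0 \<beta> t)"
    by (intro nn_integral_mono ennreal_leI power_mono pointwise norm_ge_zero)
  also have "\<dots> \<le> ennreal ((B + c * e)\<^sup>2)"
    by (rule prob_space.nn_integral_affine_square_le[OF prob_space_vp_law[OF \<mu>0] measurable score_error
          \<open>0 \<le> e\<close> B_nonneg \<open>0 \<le> c\<close>])
  finally show ?thesis
    by (simp only: c_def \<alpha>_def)
qed

theorem lemmaD10:
  fixes \<mu>0 :: "'a::euclidean_space measure"
    and \<beta> :: "real \<Rightarrow> real" and \<beta>max Bx T :: real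
    and X :: "'a set"
    and s :: "'a \<Rightarrow> real \<Rightarrow> 'a"
    and \<epsilon> :: "real \<Rightarrow> real"
  assumes "\<beta> \<in> borel_measurable borel"
    and "\<And>t. 0 \<le> \<beta> t \<and> \<beta> t \<le> \<beta>max"
    and "prob_space \<mu>0" and "sets \<mu>0 = sets borel"
    and "compact X" and "AE x in \<mu>0. x \<in> X"
    and "\<forall>x\<in>X. norm x \<le> Bx"
    and "\<And>t. (\<lambda>x. s x t) \<in> borel_measurable borel"
    and "\<And>t. 0 \<le> \<epsilon> t"
    and "\<And>t. t \<in> {0..T} \<Longrightarrow> vp_alpha \<beta> t < 1 \<Longrightarrow>
           (\<integral>\<^sup>+ x. ennreal ((norm (vp_score \<mu>0 \<beta> t x - s x t))\<^sup>2) \<partial>(vp_law \<mu>0 \<beta> t))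
             \<le> ennreal ((\<epsilon> t)\<^sup>2)"
    and "t \<in> {0..T}"
  shows "(\<integral>\<^sup>+ x. ennreal ((norm (tweedie_est s \<beta> t x))\<^sup>2) \<partial>(vp_law \<mu>0 \<beta> t))
           \<le> ennreal ((Bx + (1 - vp_alpha \<beta> t) / sqrt (vp_alpha \<beta> t) * \<epsilon> t)\<^sup>2)"
proof -
  interpret prob_space \<mu>0 by fact
  have bounded: "AE y in \<mu>0. norm y \<le> Bx"
    using assms(6) by eventually_elim (use assms(7) in blast)
  show ?thesis
  proof (cases "vp_alpha \<beta> t = 1")
    case True
    have "(\<integral>\<^sup>+ x. ennreal ((norm (tweedie_est s \<beta> t x))\<^sup>2) \<partial>vp_law \<mu>0 \<beta> t)
        = (\<integral>\<^sup>+ x. ennreal ((norm x)\<^sup>2) \<partial>\<mu>0)"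
      by (simp add: vp_law_noiseless[OF assms(3,4) True] tweedie_est_def True)
    also have "\<dots> \<le> (\<integral>\<^sup>+ x. ennreal (Bx\<^sup>2) \<partial>\<mu>0)"
      using bounded by (intro nn_integral_mono_AE) (auto elim!: eventually_mono intro!: power_mono)
    finally show ?thesis
      by (simp add: True emeasure_space_1)
  next
    case False
    with vp_alpha_le_one[of \<beta> t] assms(2) have "vp_alpha \<beta> t < 1"
      by force
    with assms(3,4,8,9,10,11) bounded show ?thesis
      by (intro tweedie_est_second_moment_le) auto
  qed
qed

end
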